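(* There exists a (finite, eight-element) left-residuated po-groupoid $\mathbf G$ which satisfies the divisibility law $(x/y)\cdot y=(y/x)\cdot x$ and the double negation law $\neg\neg x=x$, but does not satisfy the equation $x\cdot y=\neg(\neg x/y)$, and for which $\mathbf A(\mathbf G)=(G,\oplus,\neg,0)$ with $x\oplus y=\neg(\neg x\cdot\neg y)$ is not a basic algebra (it violates $\neg(\neg x\oplus y)\oplus y=\neg(\neg y\oplus x)\oplus x$).
   Context: A (bounded integral) left-residuated po-groupoid is a structure $\mathbf G=(G,\le,\cdot,/,0,1)$ where $(G,\le,0,1)$ is a bounded poset with least element $0$ and greatest element $1$, $\cdot$ is a binary operation on $G$ with $1\cdot x=x\cdot 1=x$ for all $x$ (no associativity, commutativity or monotonicity is assumed), and $/$ is a binary operation on $G$ satisfying the left residuation law: for all $x,y,z\in G$, $x\cdot y\le z\iff x\le z/y$. The negation is $\neg x:=0/x$. A basic algebra is an algebra $(A,\oplus,\neg,0)$ of type $(2,1,0)$ satisfying $x\oplus 0=x$; $\neg\neg x=x$; $\neg(\neg x\oplus y)\oplus y=\neg(\neg y\oplus x)\oplus x$; $\neg(\neg(\neg(x\oplus y)\oplus y)\oplus z)\oplus(x\oplus z)=\neg 0$. *)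

theory Defs
  imports Main
begin

text \<open>A bounded integral left-residuated po-groupoid, given on a carrier set G
  with order le, multiplication m, left residuation r (x/y = r x y),
  least element z (0) and greatest element u (1).
  No associativity, commutativity or monotonicity is assumed.\<close>

definition lr_po_groupoid ::
  "'a set \<Rightarrow> ('a \<Rightarrow> 'a \<Rightarrow> bool) \<Rightarrow> ('a \<Rightarrow> 'a \<Rightarrow> 'a) \<Rightarrow> ('a \<Rightarrow> 'a \<Rightarrow> 'a) \<Rightarrow> 'a \<Rightarrow> 'a \<Rightarrow> bool"
where
  "lr_po_groupoid G le m r z u \<longleftrightarrow>
     z \<in> G \<and> u \<in> G \<and>
     (\<forall>x\<in>G. \<forall>y\<in>G. m x y \<in> G \<and> r x y \<in> G) \<and>
     (\<forall>x\<in>G. le x x) \<and>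
     (\<forall>x\<in>G. \<forall>y\<in>G. le x y \<and> le y x \<longrightarrow> x = y) \<and>
     (\<forall>x\<in>G. \<forall>y\<in>G. \<forall>w\<in>G. le x y \<and> le y w \<longrightarrow> le x w) \<and>
     (\<forall>x\<in>G. le z x \<and> le x u) \<and>
     (\<forall>x\<in>G. m u x = x \<and> m x u = x) \<and>
     (\<forall>x\<in>G. \<forall>y\<in>G. \<forall>w\<in>G. le (m x y) w \<longleftrightarrow> le x (r w y))"

definition basic_algebra ::
  "'a set \<Rightarrow> ('a \<Rightarrow> 'a \<Rightarrow> 'a) \<Rightarrow> ('a \<Rightarrow> 'a) \<Rightarrow> 'a \<Rightarrow> bool"
where
  "basic_algebra A p n e \<longleftrightarrow>
     e \<in> A \<and> (\<forall>x\<in>A. n x \<in> A) \<and> (\<forall>x\<in>A. \<forall>y\<in>A. p x y \<in> A) \<and>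
     (\<forall>x\<in>A. p x e = x) \<and>
     (\<forall>x\<in>A. n (n x) = x) \<and>
     (\<forall>x\<in>A. \<forall>y\<in>A. p (n (p (n x) y)) y = p (n (p (n y) x)) x) \<and>
     (\<forall>x\<in>A. \<forall>y\<in>A. \<forall>w\<in>A.
        p (n (p (n (p (n (p x y)) y)) w)) (p x w) = n e)"

end

theory Submission
  imports Defs
begin

text \<open>Negation \<open>0/x\<close> is the involution \<open>(0 7)(1 4)(2 6)\<close>, which gives double negation,
  while \<open>x \<cdot> y = \<not>(\<not>x/y)\<close> fails at \<open>(1, 2)\<close> and the commutation law of \<open>\<oplus>\<close>
  at \<open>(1, 5)\<close>.\<close>

lemma ball_less_8:
  "(\<forall>x\<in>{0..<8::nat}. P x) \<longleftrightarrow> P 0 \<and> P 1 \<and> P 2 \<and> P 3 \<and> P 4 \<and> P 5 \<and> P 6 \<and> P 7"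
proof -
  have "{0..<8::nat} = {0, 1, 2, 3, 4, 5, 6, 7}" by auto
  then show ?thesis by simp
qed

lemma not_basic_algebra_if_not_commutative:
  assumes "x \<in> A" and "y \<in> A" and "p (n (p (n x) y)) y \<noteq> p (n (p (n y) x)) x"
  shows "\<not> basic_algebra A p n e"
  using assms unfolding basic_algebra_def by blast

definition G8 :: "nat set" where
  "G8 = {0..<8}"

definition le8 :: "nat \<Rightarrow> nat \<Rightarrow> bool" where
  "le8 x y \<longleftrightarrow> x = 0 \<or> x = y \<or> y = 7 \<or>
     (x, y) \<in> {(3, 2), (4, 1), (4, 2), (4, 3), (5, 1), (6, 1), (6, 5)}"

definition mult8 :: "nat \<Rightarrow> nat \<Rightarrow> nat" where
  "mult8 x y =
     [[0, 0, 0, 0, 0, 0, 0, 0],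
      [0, 4, 3, 3, 0, 6, 6, 1],
      [0, 5, 2, 4, 4, 5, 0, 2],
      [0, 6, 2, 0, 4, 5, 0, 3],
      [0, 0, 3, 0, 0, 6, 0, 4],
      [0, 4, 4, 3, 0, 0, 6, 5],
      [0, 4, 0, 3, 0, 0, 6, 6],
      [0, 1, 2, 3, 4, 5, 6, 7]] ! x ! y"

definition res8 :: "nat \<Rightarrow> nat \<Rightarrow> nat" where
  "res8 x y =
     [[7, 4, 6, 3, 1, 5, 2, 0],
      [7, 7, 5, 2, 7, 7, 7, 1],
      [7, 1, 7, 7, 7, 5, 2, 2],
      [7, 1, 1, 7, 7, 5, 2, 3],
      [7, 1, 5, 2, 7, 5, 2, 4],
      [7, 2, 6, 3, 1, 7, 7, 5],
      [7, 3, 6, 3, 1, 1, 7, 6],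
      [7, 7, 7, 7, 7, 7, 7, 7]] ! x ! y"

definition neg8 :: "nat \<Rightarrow> nat" where
  "neg8 x = res8 0 x"

definition oplus8 :: "nat \<Rightarrow> nat \<Rightarrow> nat" where
  "oplus8 x y = neg8 (mult8 (neg8 x) (neg8 y))"

lemma lr_po_groupoid_G8: "lr_po_groupoid G8 le8 mult8 res8 0 7"
  unfolding lr_po_groupoid_def G8_def ball_less_8
  by (simp add: le8_def mult8_def res8_def)

lemma G8_divisibility: "\<forall>x\<in>G8. \<forall>y\<in>G8. mult8 (res8 x y) y = mult8 (res8 y x) x"
  unfolding G8_def ball_less_8 by (simp add: mult8_def res8_def)

lemma G8_double_negation: "\<forall>x\<in>G8. neg8 (neg8 x) = x"
  unfolding G8_def ball_less_8 by (simp add: neg8_def res8_def)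

lemma G8_product_law_fails:
  "\<not> (\<forall>x\<in>G8. \<forall>y\<in>G8. mult8 x y = neg8 (res8 (neg8 x) y))"
proof
  assume "\<forall>x\<in>G8. \<forall>y\<in>G8. mult8 x y = neg8 (res8 (neg8 x) y)"
  then have "mult8 1 2 = neg8 (res8 (neg8 1) 2)" by (simp add: G8_def)
  then show False by (simp add: neg8_def mult8_def res8_def)
qed

lemma G8_commutation_fails:
  "\<exists>x\<in>G8. \<exists>y\<in>G8. oplus8 (neg8 (oplus8 (neg8 x) y)) y \<noteq> oplus8 (neg8 (oplus8 (neg8 y) x)) x"
proof (intro bexI)
  show "oplus8 (neg8 (oplus8 (neg8 1) 5)) 5 \<noteq> oplus8 (neg8 (oplus8 (neg8 5) 1)) 1"
    by (simp add: oplus8_def neg8_def mult8_def res8_def)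
qed (simp_all add: G8_def)

theorem mainTheorem9:
  shows "\<exists>(G :: nat set) le m r z u.
    finite G \<and> card G = 8 \<and>
    lr_po_groupoid G le m r z u \<and>
    (\<forall>x\<in>G. \<forall>y\<in>G. m (r x y) y = m (r y x) x) \<and>
    (\<forall>x\<in>G. r z (r z x) = x) \<and>
    \<not> (\<forall>x\<in>G. \<forall>y\<in>G. m x y = r z (r (r z x) y)) \<and>
    \<not> basic_algebra G (\<lambda>x y. r z (m (r z x) (r z y))) (\<lambda>x. r z x) z \<and>
    (\<exists>x\<in>G. \<exists>y\<in>G.
       (\<lambda>x y. r z (m (r z x) (r z y))) (r z ((\<lambda>x y. r z (m (r z x) (r z y))) (r z x) y)) y \<noteq>
       (\<lambda>x y. r z (m (r z x) (r z y))) (r z ((\<lambda>x y. r z (m (r z x) (r z y))) (r z y) x)) x)"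
proof -
  have not_basic: "\<not> basic_algebra G8 oplus8 neg8 0"
    using G8_commutation_fails by (elim bexE) (rule not_basic_algebra_if_not_commutative)
  have "finite G8" "card G8 = 8" by (simp_all add: G8_def)
  with lr_po_groupoid_G8 G8_divisibility G8_double_negation G8_product_law_fails
    not_basic G8_commutation_fails
  show ?thesis
    unfolding oplus8_def neg8_def
    by (intro exI[of _ G8] exI[of _ le8] exI[of _ mult8] exI[of _ res8] exI[of _ 0] exI[of _ 7]
        conjI) assumption+
qed

end
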